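(* Let $f:\mathbb{R}^n\to\mathbb{R}$ be differentiable and pseudo-convex, with $\nabla f$ $L$-Lipschitz continuous ($L>0$), and assume the stationary set $X^*$ is non-empty. Let $0<h<\frac{1}{L}$ and $\beta\in\left(\frac{1-\sqrt{1-h^2L^2}}{h^2L^2},1\right]$. Then the sequence $\{x^k\}$ generated by Algorithm 1 from any $x^0\in\mathbb{R}^n$ converges to a point of $X^*$.
   Context: A differentiable $f$ is pseudo-convex if $\nabla f$ is pseudo-monotone, i.e. for all $x,y$, $\langle \nabla f(x),y-x\rangle\ge 0$ implies $\langle \nabla f(y),y-x\rangle\ge0$. The stationary set is $X^*=\{x\in\mathbb{R}^n:\nabla f(x)=0\}$. Algorithm 1: given $x^0$, for $k=0,1,2,\dots$ set $z^k=x^k-h\nabla f(x^k)$ and $x^{k+1}=x^k-h\big(\nabla f(x^k)-\beta(\nabla f(x^k)-\nabla f(z^k))\big)$. *)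

theory Defs
  imports "HOL-Analysis.Analysis"
begin

definition pseudo_monotone :: "('a::real_inner \<Rightarrow> 'a) \<Rightarrow> bool" where
  "pseudo_monotone F \<longleftrightarrow>
     (\<forall>x y. inner (F x) (y - x) \<ge> 0 \<longrightarrow> inner (F y) (y - x) \<ge> 0)"

text \<open>A differentiable f with gradient g is pseudo-convex iff g is pseudo-monotone.\<close>
definition pseudo_convex :: "('a::real_inner \<Rightarrow> real) \<Rightarrow> ('a \<Rightarrow> 'a) \<Rightarrow> bool" where
  "pseudo_convex f g \<longleftrightarrow> pseudo_monotone g"

definition stationary_set :: "('a::real_inner \<Rightarrow> 'a) \<Rightarrow> 'a set" where
  "stationary_set g = {x. g x = 0}"

definition alg1_step :: "('a::real_vector \<Rightarrow> 'a) \<Rightarrow> real \<Rightarrow> real \<Rightarrow> 'a \<Rightarrow> 'a" where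
  "alg1_step g h \<beta> x =
     (let z = x - h *\<^sub>R g x in x - h *\<^sub>R (g x - \<beta> *\<^sub>R (g x - g z)))"

primrec alg1_seq :: "('a::real_vector \<Rightarrow> 'a) \<Rightarrow> real \<Rightarrow> real \<Rightarrow> 'a \<Rightarrow> nat \<Rightarrow> 'a" where
  "alg1_seq g h \<beta> x0 0 = x0"
| "alg1_seq g h \<beta> x0 (Suc k) = alg1_step g h \<beta> (alg1_seq g h \<beta> x0 k)"

end

theory Submission
  imports Defs
begin

text \<open>For a stationary point p, pseudo-monotonicity gives \<open>\<langle>g y, y - p\<rangle> \<ge> 0\<close> both at
  the iterate \<open>x\<^sup>k\<close> and at the extrapolated point \<open>z\<^sup>k\<close>. With the Lipschitz bound
  \<open>\<parallel>g z\<^sup>k - g x\<^sup>k\<parallel> \<le> L h \<parallel>g x\<^sup>k\<parallel>\<close> this yields the descent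
  \<open>\<parallel>x\<^sup>k\<^sup>+\<^sup>1 - p\<parallel>\<^sup>2 \<le> \<parallel>x\<^sup>k - p\<parallel>\<^sup>2 - h\<^sup>2 (2\<beta> - 1 - \<beta>\<^sup>2 h\<^sup>2 L\<^sup>2) \<parallel>g x\<^sup>k\<parallel>\<^sup>2\<close>,
  whose coefficient is positive for the admissible \<beta>. Summing it shows \<open>g x\<^sup>k \<rightarrow> 0\<close>,
  so every cluster point of the (bounded) sequence is stationary, and since the distance to every
  stationary point is non-increasing, one convergent subsequence forces convergence of the whole
  sequence. Pseudo-convexity is defined through g.\<close>

text \<open>The admissible \<beta> lie strictly between the roots \<open>(1 \<plusminus> sqrt (1 - t)) / t\<close> of
  \<open>t \<beta>\<^sup>2 - 2 \<beta> + 1\<close>, where this quadratic is negative.\<close>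
lemma descent_coefficient_pos:
  fixes t \<beta> :: real
  assumes "0 < t" "t < 1" "(1 - sqrt (1 - t)) / t < \<beta>" "\<beta> \<le> 1"
  shows "0 < 2 * \<beta> - 1 - \<beta>\<^sup>2 * t"
proof -
  define s where "s = sqrt (1 - t)"
  have s2: "s\<^sup>2 = 1 - t"
    using assms by (simp add: s_def)
  have "1 - s < t * \<beta>"
    using assms(1,3) by (simp add: s_def field_simps)
  moreover have "t * \<beta> < 1 + s"
  proof -
    have "t * \<beta> \<le> t"
      using mult_left_mono[of \<beta> 1 t] assms(1,4) by simp
    then show ?thesis
      using assms(2) s_def real_sqrt_ge_zero[of "1 - t"] by linarith
  qed
  ultimately have "0 < (t * \<beta> - (1 - s)) * ((1 + s) - t * \<beta>)"
    by simp
  also have "\<dots> = t * (2 * \<beta> - 1 - \<beta>\<^sup>2 * t)"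
    using s2 by (simp add: algebra_simps power2_eq_square)
  finally show ?thesis
    using assms(1) by (simp add: zero_less_mult_iff)
qed

lemma summable_descent_decrements:
  fixes V e :: "nat \<Rightarrow> real"
  assumes descent: "\<And>k. V (Suc k) \<le> V k - e k"
    and "\<And>k. 0 \<le> V k" and "\<And>k. 0 \<le> e k"
  shows "summable e"
proof (rule summableI_nonneg_bounded)
  have partial_sums: "(\<Sum>k<n. e k) \<le> V 0 - V n" for n
  proof (induction n)
    case (Suc n)
    with descent[of n] show ?case by simp
  qed simp
  show "(\<Sum>k<n. e k) \<le> V 0" for n
    using partial_sums[of n] assms(2)[of n] by linarith
qed (use assms in auto)

lemma Fejer_monotone_convergent:
  fixes x :: "nat \<Rightarrow> 'a::heine_borel"
  assumes fejer: "\<And>p k. p \<in> S \<Longrightarrow> dist (x (Suc k)) p \<le> dist (x k) p"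
    and "S \<noteq> {}"
    and cluster: "\<And>r l. strict_mono r \<Longrightarrow> (x \<circ> r) \<longlonglongrightarrow> l \<Longrightarrow> l \<in> S"
  shows "\<exists>l\<in>S. x \<longlonglongrightarrow> l"
proof -
  have antimono: "dist (x n) p \<le> dist (x m) p" if "p \<in> S" "m \<le> n" for p m n
    using lift_Suc_antimono_le[of "\<lambda>k. dist (x k) p", OF fejer[OF \<open>p \<in> S\<close>] \<open>m \<le> n\<close>] .
  obtain p where "p \<in> S"
    using \<open>S \<noteq> {}\<close> by blast
  then have "range x \<subseteq> cball p (dist (x 0) p)"
    using antimono by (auto simp: dist_commute)
  then have "bounded (range x)"
    using bounded_cball bounded_subset by blast
  then obtain l r where r: "strict_mono r" and xr: "(x \<circ> r) \<longlonglongrightarrow> l"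
    using bounded_imp_convergent_subsequence by blast
  have "l \<in> S"
    using cluster[OF r xr] .
  have "x \<longlonglongrightarrow> l"
  proof (rule metric_LIMSEQ_I)
    fix e :: real assume "0 < e"
    then obtain N where "dist (x (r N)) l < e"
      using metric_LIMSEQ_D[OF xr] by fastforce
    then show "\<exists>M. \<forall>n\<ge>M. dist (x n) l < e"
      using antimono[OF \<open>l \<in> S\<close>] order_le_less_trans by blast
  qed
  with \<open>l \<in> S\<close> show ?thesis by blast
qed

lemma Fejer_descent_convergent:
  fixes x :: "nat \<Rightarrow> 'a::{heine_borel,real_normed_vector}" and g :: "'a \<Rightarrow> 'b::real_normed_vector"
  assumes descent: "\<And>p k. g p = 0 \<Longrightarrow>
      (norm (x (Suc k) - p))\<^sup>2 \<le> (norm (x k - p))\<^sup>2 - c * (norm (g (x k)))\<^sup>2"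
    and "0 < c" and cont: "continuous_on UNIV g" and "g p0 = 0"
  shows "\<exists>l. g l = 0 \<and> x \<longlonglongrightarrow> l"
proof -
  have "summable (\<lambda>k. (norm (g (x k)))\<^sup>2)"
    by (rule summable_descent_decrements[where V = "\<lambda>k. (norm (x k - p0))\<^sup>2 / c"])
      (use descent[OF \<open>g p0 = 0\<close>] \<open>0 < c\<close> in \<open>simp_all add: field_simps\<close>)
  then have "(\<lambda>k. (norm (g (x k)))\<^sup>2) \<longlonglongrightarrow> 0"
    by (rule summable_LIMSEQ_zero)
  then have g0: "(\<lambda>k. g (x k)) \<longlonglongrightarrow> 0"
    by (simp add: power_tendsto_0_iff tendsto_norm_zero_iff)
  have "l \<in> {p. g p = 0}" if "strict_mono r" "(x \<circ> r) \<longlonglongrightarrow> l" for r l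
  proof -
    have "(g \<circ> (x \<circ> r)) \<longlonglongrightarrow> g l"
      using continuous_on_tendsto_compose[OF cont that(2)] by (simp add: comp_def)
    moreover have "(g \<circ> (x \<circ> r)) \<longlonglongrightarrow> 0"
      using LIMSEQ_subseq_LIMSEQ[OF g0 that(1)] by (simp add: comp_def)
    ultimately show ?thesis
      using LIMSEQ_unique by blast
  qed
  moreover have "dist (x (Suc k)) p \<le> dist (x k) p" if "p \<in> {p. g p = 0}" for p k
  proof -
    have "0 \<le> c * (norm (g (x k)))\<^sup>2"
      using \<open>0 < c\<close> by simp
    moreover have "g p = 0"
      using that by simp
    ultimately have "(norm (x (Suc k) - p))\<^sup>2 \<le> (norm (x k - p))\<^sup>2"
      using descent[of p k] by linarith
    then show ?thesis
      unfolding dist_norm by (rule power2_le_imp_le) simp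
  qed
  moreover have "{p. g p = 0} \<noteq> {}"
    using \<open>g p0 = 0\<close> by blast
  ultimately show ?thesis
    using Fejer_monotone_convergent[of "{p. g p = 0}" x] by blast
qed

lemma pseudo_monotone_stationary:
  assumes "pseudo_monotone g" and "g p = 0"
  shows "0 \<le> inner (g y) (y - p)"
  using assms unfolding pseudo_monotone_def by (metis inner_zero_left order_refl)

lemma alg1_step_eq:
  "alg1_step g h \<beta> x = x - h *\<^sub>R ((1 - \<beta>) *\<^sub>R g x + \<beta> *\<^sub>R g (x - h *\<^sub>R g x))"
  by (simp add: alg1_step_def Let_def algebra_simps)

lemma norm_extragradient_step_le:
  fixes u a b :: "'a::real_inner"
  assumes au: "0 \<le> inner a u" and bu: "0 \<le> inner b (u - h *\<^sub>R a)"
    and ba: "norm (b - a) \<le> L * h * norm a"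
    and "0 \<le> h" and "0 \<le> \<beta>" and "\<beta> \<le> 1"
  shows "(norm (u - h *\<^sub>R ((1 - \<beta>) *\<^sub>R a + \<beta> *\<^sub>R b)))\<^sup>2
    \<le> (norm u)\<^sup>2 - h\<^sup>2 * (2 * \<beta> - 1 - \<beta>\<^sup>2 * h\<^sup>2 * L\<^sup>2) * (norm a)\<^sup>2"
proof -
  define d where "d = b - a"
  define w where "w = (1 - \<beta>) *\<^sub>R a + \<beta> *\<^sub>R b"
  have w_eq: "w = a + \<beta> *\<^sub>R d"
    by (simp add: w_def d_def algebra_simps)
  have "h * \<beta> * ((norm a)\<^sup>2 + inner a d) = h * \<beta> * inner b a"
    by (simp add: d_def inner_diff_right inner_commute power2_norm_eq_inner)
  also have "\<dots> \<le> (1 - \<beta>) * inner a u + \<beta> * inner b u"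
  proof -
    have "\<beta> * (h * inner b a) \<le> \<beta> * inner b u"
      using bu \<open>0 \<le> \<beta>\<close> by (intro mult_left_mono) (simp_all add: inner_diff_right)
    moreover have "0 \<le> (1 - \<beta>) * inner a u"
      using au \<open>\<beta> \<le> 1\<close> by simp
    ultimately show ?thesis by (simp add: algebra_simps)
  qed
  also have "\<dots> = inner w u"
    by (simp add: w_def inner_add_left)
  finally have wu: "h * \<beta> * ((norm a)\<^sup>2 + inner a d) \<le> inner w u" .
  have ww: "(norm w)\<^sup>2 = (norm a)\<^sup>2 + 2 * \<beta> * inner a d + \<beta>\<^sup>2 * (norm d)\<^sup>2"
    unfolding w_eq power2_norm_eq_inner inner_add_left inner_add_right
    by (simp add: inner_commute power2_eq_square algebra_simps)
  have dd: "(norm d)\<^sup>2 \<le> (L * h * norm a)\<^sup>2"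
    using ba by (simp add: d_def power_mono)
  have "(norm (u - h *\<^sub>R w))\<^sup>2 = (norm u)\<^sup>2 - 2 * h * inner w u + h\<^sup>2 * (norm w)\<^sup>2"
    unfolding power2_norm_eq_inner inner_diff_left inner_diff_right
    by (simp add: inner_commute power2_eq_square algebra_simps)
  also have "\<dots> \<le> (norm u)\<^sup>2 - 2 * h * (h * \<beta> * ((norm a)\<^sup>2 + inner a d)) + h\<^sup>2 * (norm w)\<^sup>2"
    using wu \<open>0 \<le> h\<close> by (simp add: mult_left_mono)
  also have "\<dots> = (norm u)\<^sup>2 - h\<^sup>2 * (2 * \<beta> - 1) * (norm a)\<^sup>2 + h\<^sup>2 * \<beta>\<^sup>2 * (norm d)\<^sup>2"
    unfolding ww by (simp add: power2_eq_square algebra_simps)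
  also have "\<dots> \<le> (norm u)\<^sup>2 - h\<^sup>2 * (2 * \<beta> - 1) * (norm a)\<^sup>2 + h\<^sup>2 * \<beta>\<^sup>2 * (L * h * norm a)\<^sup>2"
    using dd by (simp add: mult_left_mono)
  also have "\<dots> = (norm u)\<^sup>2 - h\<^sup>2 * (2 * \<beta> - 1 - \<beta>\<^sup>2 * h\<^sup>2 * L\<^sup>2) * (norm a)\<^sup>2"
    by (simp add: power2_eq_square algebra_simps)
  finally show ?thesis by (simp add: w_def)
qed

lemma alg1_step_Fejer:
  fixes g :: "'a::real_inner \<Rightarrow> 'a"
  assumes pm: "pseudo_monotone g" and "g p = 0"
    and Lip: "\<And>x y. norm (g x - g y) \<le> L * norm (x - y)"
    and "0 \<le> h" and "0 \<le> \<beta>" and "\<beta> \<le> 1"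
  shows "(norm (alg1_step g h \<beta> x - p))\<^sup>2
    \<le> (norm (x - p))\<^sup>2 - h\<^sup>2 * (2 * \<beta> - 1 - \<beta>\<^sup>2 * h\<^sup>2 * L\<^sup>2) * (norm (g x))\<^sup>2"
proof -
  define z where "z = x - h *\<^sub>R g x"
  have "0 \<le> inner (g x) (x - p)"
    using pseudo_monotone_stationary[OF pm \<open>g p = 0\<close>] .
  moreover have "0 \<le> inner (g z) ((x - p) - h *\<^sub>R g x)"
    using pseudo_monotone_stationary[OF pm \<open>g p = 0\<close>, of z] by (simp add: z_def algebra_simps)
  moreover have "norm (g z - g x) \<le> L * h * norm (g x)"
    using Lip[of z x] \<open>0 \<le> h\<close> by (simp add: z_def mult.assoc)
  ultimately have "(norm ((x - p) - h *\<^sub>R ((1 - \<beta>) *\<^sub>R g x + \<beta> *\<^sub>R g z)))\<^sup>2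
      \<le> (norm (x - p))\<^sup>2 - h\<^sup>2 * (2 * \<beta> - 1 - \<beta>\<^sup>2 * h\<^sup>2 * L\<^sup>2) * (norm (g x))\<^sup>2"
    using assms(4-6) by (rule norm_extragradient_step_le)
  moreover have "(x - p) - h *\<^sub>R ((1 - \<beta>) *\<^sub>R g x + \<beta> *\<^sub>R g z) = alg1_step g h \<beta> x - p"
    by (simp add: alg1_step_eq z_def)
  ultimately show ?thesis
    by simp
qed

theorem theorem1:
  fixes f :: "real ^ 'n \<Rightarrow> real" and g :: "real ^ 'n \<Rightarrow> real ^ 'n"
    and L h \<beta> :: real and x0 :: "real ^ 'n"
  assumes grad: "\<And>x. (f has_derivative (\<lambda>v. inner (g x) v)) (at x)"
    and pc: "pseudo_convex f g"
    and Lpos: "L > 0"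
    and Lip: "\<And>x y. norm (g x - g y) \<le> L * norm (x - y)"
    and nonempty: "stationary_set g \<noteq> {}"
    and hpos: "0 < h" and hL: "h < 1 / L"
    and blo: "(1 - sqrt (1 - h\<^sup>2 * L\<^sup>2)) / (h\<^sup>2 * L\<^sup>2) < \<beta>"
    and bhi: "\<beta> \<le> 1"
  shows "\<exists>xs \<in> stationary_set g. alg1_seq g h \<beta> x0 \<longlonglongrightarrow> xs"
proof -
  have "h * L < 1"
    using hL Lpos by (simp add: field_simps)
  then have "h\<^sup>2 * L\<^sup>2 < 1"
    unfolding power_mult_distrib[symmetric] using hpos Lpos by (simp add: power_less_one_iff)
  then have coeff: "0 < 2 * \<beta> - 1 - \<beta>\<^sup>2 * (h\<^sup>2 * L\<^sup>2)"
    using descent_coefficient_pos[OF _ _ blo bhi] hpos Lpos by simp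
  moreover have "0 \<le> \<beta>\<^sup>2 * (h\<^sup>2 * L\<^sup>2)"
    by simp
  ultimately have "0 \<le> \<beta>"
    by linarith
  have cont: "continuous_on UNIV g"
    using Lip Lpos by (intro lipschitz_on_continuous_on[of L] lipschitz_onI) (simp_all add: dist_norm)
  obtain p0 where "g p0 = 0"
    using nonempty by (auto simp: stationary_set_def)
  have "\<exists>l. g l = 0 \<and> alg1_seq g h \<beta> x0 \<longlonglongrightarrow> l"
  proof (rule Fejer_descent_convergent[OF _ _ cont \<open>g p0 = 0\<close>])
    show "0 < h\<^sup>2 * (2 * \<beta> - 1 - \<beta>\<^sup>2 * h\<^sup>2 * L\<^sup>2)"
      using coeff hpos by (simp add: mult.assoc)
    show "(norm (alg1_seq g h \<beta> x0 (Suc k) - p))\<^sup>2 \<le> (norm (alg1_seq g h \<beta> x0 k - p))\<^sup>2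
        - h\<^sup>2 * (2 * \<beta> - 1 - \<beta>\<^sup>2 * h\<^sup>2 * L\<^sup>2) * (norm (g (alg1_seq g h \<beta> x0 k)))\<^sup>2"
      if "g p = 0" for p k
      using alg1_step_Fejer[OF _ that Lip] pc hpos \<open>0 \<le> \<beta>\<close> bhi by (simp add: pseudo_convex_def)
  qed
  then show ?thesis
    by (auto simp: stationary_set_def)
qed

end
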